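(* Let $S$ be a Stone relation algebra, and let $C : S\to\mathbb{N}\cup\{\infty\}$ map each $x$ to the number of atoms $a\in S$ with $a\sqsubseteq x$. Then $C$ satisfies: (C1a) $C(\bot)=0$; (C2a) $C(x)=1$ for every atom $x$; (C3) $C(x^{\smile})=C(x)$ for all $x$; (C4a) $C(x)+C(y)=C(x\sqcup y)+C(x\sqcap y)$ for all $x,y$; (C4b) $x\sqsubseteq y$ implies $C(x)\le C(y)$. If moreover $S$ is atomic, then $C$ also satisfies: (C1b) $C(x)=0\iff x=\bot$; (C5a) $C(x^{\smile}y\sqcap z)\le C(xz\sqcap y)$ for all $y,z$ and all univalent $x$; (C5b) $C(x\sqcap yz^{\smile})\le C(xz\sqcap y)$ for all $y,z$ and all univalent $x$; (C5c) $C(yx)\le C(y)$ for all $y$ and all univalent $x$; (C5d) $C(x\sqcap y\top)\le C(y)$ for all $y$ and all univalent $x$; (C5e) $C(x\sqcap yy^{\smile})\le C(y)$ for all $y$ and all univalent $x$; (C6a) $C(1\sqcap xx^{\smile})\le C(x)$ for all $x$; (C6b) $C(1\sqcap x^{\smile}x)\le C(x)$ for all $x$.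
   Context: A Stone relation algebra is a structure $(S,\sqcup,\sqcap,\cdot,\overline{\,\cdot\,},{}^{\smile},\bot,\top,1)$ (write $xy$ for $x\cdot y$, $\overline{x}$ for the pseudocomplement, $x^{\smile}$ for the converse) such that: $(S,\sqcup,\sqcap,\bot,\top)$ is a bounded distributive lattice with order $x\sqsubseteq y\iff x\sqcup y=y$; $x\sqcap y=\bot\iff x\sqsubseteq\overline{y}$; $\overline{x}\sqcup\overline{\overline{x}}=\top$; $\cdot$ is associative with two-sided unit $1$, distributes over $\sqcup$ on both sides, and $\bot$ is a zero of $\cdot$; $x^{\smile\smile}=x$, $(xy)^{\smile}=y^{\smile}x^{\smile}$, $(x\sqcup y)^{\smile}=x^{\smile}\sqcup y^{\smile}$; $\overline{\overline{1}}=1$; $\overline{\overline{xy}}=\overline{\overline{x}}\,\overline{\overline{y}}$; $xy\sqcap z\sqsubseteq x(y\sqcap x^{\smile}z)$. An atom is an element $x\neq\bot$ such that $\bot\neq y\sqsubseteq x$ implies $y=x$. $S$ is atomic if every $x\neq\bot$ has an atom below it. $x$ is univalent if $x^{\smile}x\sqsubseteq 1$. Arithmetic in $\mathbb{N}\cup\{\infty\}$ is the usual one with $n+\infty=\infty+n=\infty$ and $n\le\infty$. *)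

theory Defs
  imports Main "HOL-Library.Extended_Nat"
begin

text \<open>The lattice part is a bounded distributive lattice
  (inf, sup, bot, top, less_eq); composition is times, its unit is one,
  pcomp is the pseudocomplement and conv the converse.\<close>

class stone_relation_algebra = bounded_lattice + distrib_lattice + times + one +
  fixes pcomp :: "'a \<Rightarrow> 'a"
    and conv :: "'a \<Rightarrow> 'a"
  assumes pcomp_galois: "inf x y = bot \<longleftrightarrow> x \<le> pcomp y"
    and stone: "sup (pcomp x) (pcomp (pcomp x)) = top"
    and comp_assoc: "(x * y) * z = x * (y * z)"
    and comp_left_one: "1 * x = x"
    and comp_right_one: "x * 1 = x"
    and comp_left_dist_sup: "x * sup y z = sup (x * y) (x * z)"
    and comp_right_dist_sup: "sup x y * z = sup (x * z) (y * z)"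
    and comp_left_zero: "bot * x = bot"
    and comp_right_zero: "x * bot = bot"
    and conv_involutive: "conv (conv x) = x"
    and conv_dist_comp: "conv (x * y) = conv y * conv x"
    and conv_dist_sup: "conv (sup x y) = sup (conv x) (conv y)"
    and pp_one: "pcomp (pcomp 1) = 1"
    and pp_dist_comp: "pcomp (pcomp (x * y)) = pcomp (pcomp x) * pcomp (pcomp y)"
    and dedekind_1: "inf (x * y) z \<le> x * inf y (conv x * z)"

definition atom :: "'a::stone_relation_algebra \<Rightarrow> bool" where
  "atom x \<longleftrightarrow> x \<noteq> bot \<and> (\<forall>y. y \<noteq> bot \<and> y \<le> x \<longrightarrow> y = x)"

definition univalent :: "'a::stone_relation_algebra \<Rightarrow> bool" where
  "univalent x \<longleftrightarrow> conv x * x \<le> 1"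

definition atom_count :: "'a::stone_relation_algebra \<Rightarrow> enat" where
  "atom_count x = (if finite {a. atom a \<and> a \<le> x} then enat (card {a. atom a \<and> a \<le> x}) else \<infinity>)"

end

theory Submission
  imports Defs
begin

text \<open>Passing from x to the set of atoms below x turns sup, inf and conv into union,
  intersection and a bijective image, so the first group of properties are facts about
  cardinalities. For the inequalities involving a univalent x, each atom a on the smaller side
  is sent to some atom below the meet of the larger side with a witness g a (x * a or a * z);
  a Dedekind law shows that this meet is not bot, and univalence makes g preserve
  disjointness, so distinct atoms get distinct images. The remaining inequalities are
  instances of these two, combined with conversion and monotonicity.\<close>

lemma comp_left_isotone: "(y::'a::stone_relation_algebra) \<le> z \<Longrightarrow> x * y \<le> x * z"
  by (metis comp_left_dist_sup le_iff_sup)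

lemma comp_right_isotone: "(y::'a::stone_relation_algebra) \<le> z \<Longrightarrow> y * x \<le> z * x"
  by (metis comp_right_dist_sup le_iff_sup)

lemma conv_isotone: "(x::'a::stone_relation_algebra) \<le> y \<Longrightarrow> conv x \<le> conv y"
  by (metis conv_dist_sup le_iff_sup)

lemma conv_le_conv_iff: "conv (x::'a::stone_relation_algebra) \<le> conv y \<longleftrightarrow> x \<le> y"
  by (metis conv_isotone conv_involutive)

lemma conv_bot: "conv bot = (bot::'a::stone_relation_algebra)"
  by (metis bot_least bot_unique conv_involutive conv_isotone)

lemma conv_top: "conv top = (top::'a::stone_relation_algebra)"
  by (metis top_greatest top_unique conv_involutive conv_isotone)

lemma conv_one: "conv 1 = (1::'a::stone_relation_algebra)"
  by (metis comp_left_one conv_dist_comp conv_involutive)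

lemma conv_dist_inf: "conv (inf (x::'a::stone_relation_algebra) y) = inf (conv x) (conv y)"
proof (rule antisym)
  show "conv (inf x y) \<le> inf (conv x) (conv y)"
    by (simp add: conv_isotone)
  have "conv (inf (conv x) (conv y)) \<le> inf x y"
    by (metis conv_involutive conv_isotone inf_le1 inf_le2 le_inf_iff)
  then show "inf (conv x) (conv y) \<le> conv (inf x y)"
    by (metis conv_involutive conv_isotone)
qed

lemma dedekind_2: "inf ((x::'a::stone_relation_algebra) * y) z \<le> inf x (z * conv y) * y"
proof -
  have "conv (inf (x * y) z) \<le> conv y * inf (conv x) (y * conv z)"
    using dedekind_1[of "conv y" "conv x" "conv z"]
    by (simp add: conv_dist_inf conv_dist_comp conv_involutive)
  also have "\<dots> = conv (inf x (z * conv y) * y)"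
    by (simp add: conv_dist_inf conv_dist_comp conv_involutive)
  finally show ?thesis
    by (simp add: conv_le_conv_iff)
qed

lemma univalent_one: "univalent (1::'a::stone_relation_algebra)"
  by (simp add: univalent_def conv_one comp_left_one)

lemma univalent_comp_left_dist_inf:
  fixes x :: "'a::stone_relation_algebra"
  assumes "univalent x"
  shows "x * inf y z = inf (x * y) (x * z)"
proof (rule antisym)
  show "x * inf y z \<le> inf (x * y) (x * z)"
    by (simp add: comp_left_isotone)
  have "conv x * (x * z) \<le> z"
    using assms comp_right_isotone unfolding univalent_def
    by (metis comp_assoc comp_left_one)
  then have "x * inf y (conv x * (x * z)) \<le> x * inf y z"
    by (simp add: comp_left_isotone le_infI2)
  then show "inf (x * y) (x * z) \<le> x * inf y z"
    using dedekind_1 order_trans by blast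
qed

lemma univalent_inf_comp_top_le:
  fixes x :: "'a::stone_relation_algebra"
  assumes "univalent x" and "v \<le> x"
  shows "inf x (v * top) \<le> v"
proof -
  have "inf x (v * top) \<le> v * inf top (conv v * x)"
    using dedekind_1[of v top x] by (simp add: inf_commute)
  also have "\<dots> \<le> v * (conv x * x)"
    by (simp add: assms(2) comp_left_isotone comp_right_isotone conv_isotone)
  also have "\<dots> \<le> v"
    using assms(1) comp_left_isotone comp_right_one unfolding univalent_def by metis
  finally show ?thesis .
qed

lemma univalent_below_comp_right_dist_inf:
  fixes x :: "'a::stone_relation_algebra"
  assumes "univalent x" and "u \<le> x" and "v \<le> x"
  shows "inf u v * z = inf (u * z) (v * z)"
proof (rule antisym)
  show "inf u v * z \<le> inf (u * z) (v * z)"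
    by (simp add: comp_right_isotone)
  have "v * z * conv z \<le> v * top"
    by (simp add: comp_assoc comp_left_isotone)
  then have "inf u (v * z * conv z) \<le> inf u (inf x (v * top))"
    using assms(2) by (simp add: le_infI1 le_infI2)
  also have "\<dots> \<le> inf u v"
    using univalent_inf_comp_top_le[OF assms(1,3)] inf_mono by blast
  finally show "inf (u * z) (v * z) \<le> inf u v * z"
    using dedekind_2 comp_right_isotone order_trans by blast
qed

definition atoms_below :: "'a::stone_relation_algebra \<Rightarrow> 'a set" where
  "atoms_below x = {a. atom a \<and> a \<le> x}"

lemma atom_not_le_bot: "atom a \<Longrightarrow> \<not> a \<le> bot"
  unfolding atom_def by (simp add: bot_unique)

lemma atoms_inf_eq_bot: "atom a \<Longrightarrow> atom b \<Longrightarrow> a \<noteq> b \<Longrightarrow> inf a b = bot"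
  unfolding atom_def by (metis inf.cobounded1 inf.cobounded2)

lemma atom_conv: "atom a \<Longrightarrow> atom (conv a)"
  unfolding atom_def by (metis conv_bot conv_involutive conv_le_conv_iff)

lemma atom_le_sup_iff: "atom a \<Longrightarrow> a \<le> sup x y \<longleftrightarrow> a \<le> x \<or> a \<le> y"
proof
  assume "atom a" and "a \<le> sup x y"
  then have "a = sup (inf a x) (inf a y)"
    by (metis inf.absorb1 inf_sup_distrib1)
  with \<open>atom a\<close> show "a \<le> x \<or> a \<le> y"
    unfolding atom_def by (metis inf.cobounded1 inf.cobounded2 sup_bot.left_neutral)
qed (auto intro: le_supI1 le_supI2)

lemma atoms_below_bot: "atoms_below bot = {}"
  by (auto simp: atoms_below_def atom_not_le_bot)

lemma atoms_below_atom: "atom x \<Longrightarrow> atoms_below x = {x}"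
  unfolding atoms_below_def atom_def by auto

lemma atoms_below_conv: "atoms_below (conv x) = conv ` atoms_below x"
proof (intro equalityI subsetI)
  fix a assume "a \<in> atoms_below (conv x)"
  then have "conv a \<in> atoms_below x"
    by (metis atoms_below_def atom_conv conv_involutive conv_le_conv_iff mem_Collect_eq)
  then show "a \<in> conv ` atoms_below x"
    by (metis conv_involutive image_eqI)
qed (auto simp: atoms_below_def atom_conv conv_isotone)

lemma atoms_below_sup: "atoms_below (sup x y) = atoms_below x \<union> atoms_below y"
  by (auto simp: atoms_below_def atom_le_sup_iff)

lemma atoms_below_inf: "atoms_below (inf x y) = atoms_below x \<inter> atoms_below y"
  by (auto simp: atoms_below_def)

lemma atoms_below_mono: "x \<le> y \<Longrightarrow> atoms_below x \<subseteq> atoms_below y"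
  by (auto simp: atoms_below_def)

lemma atoms_below_empty_iff:
  assumes "\<forall>x::'a::stone_relation_algebra. x \<noteq> bot \<longrightarrow> (\<exists>a. atom a \<and> a \<le> x)"
  shows "atoms_below (x::'a) = {} \<longleftrightarrow> x = bot"
  using assms by (auto simp: atoms_below_def atom_not_le_bot)

definition ecard :: "'a set \<Rightarrow> enat" where
  "ecard A = (if finite A then enat (card A) else \<infinity>)"

lemma ecard_empty: "ecard {} = 0"
  by (simp add: ecard_def zero_enat_def)

lemma ecard_singleton: "ecard {a} = 1"
  by (simp add: ecard_def one_enat_def)

lemma ecard_eq_0_iff: "ecard A = 0 \<longleftrightarrow> A = {}"
  by (auto simp: ecard_def zero_enat_def)

lemma ecard_mono:
  assumes "A \<subseteq> B"
  shows "ecard A \<le> ecard B"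
proof (cases "finite B")
  case True
  with assms show ?thesis
    by (simp add: ecard_def card_mono rev_finite_subset)
qed (simp add: ecard_def)

lemma ecard_image: "inj_on f A \<Longrightarrow> ecard (f ` A) = ecard A"
  by (simp add: ecard_def card_image finite_image_iff)

lemma ecard_inj_on_le: "inj_on f A \<Longrightarrow> f ` A \<subseteq> B \<Longrightarrow> ecard A \<le> ecard B"
  by (metis ecard_image ecard_mono)

lemma ecard_Un_Int: "ecard A + ecard B = ecard (A \<union> B) + ecard (A \<inter> B)"
proof (cases "finite A \<and> finite B")
  case True
  then show ?thesis
    by (simp add: ecard_def card_Un_Int[of A B])
qed (auto simp: ecard_def)

lemma atom_count_eq_ecard: "atom_count x = ecard (atoms_below x)"
  by (simp add: atom_count_def ecard_def atoms_below_def)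

lemma atom_count_bot: "atom_count (bot::'a::stone_relation_algebra) = 0"
  by (simp add: atom_count_eq_ecard atoms_below_bot ecard_empty)

lemma atom_count_atom: "atom x \<Longrightarrow> atom_count x = 1"
  by (simp add: atom_count_eq_ecard atoms_below_atom ecard_singleton)

lemma atom_count_conv: "atom_count (conv x) = atom_count x"
proof -
  have "inj_on conv (atoms_below x)"
    by (rule inj_onI) (metis conv_involutive)
  then show ?thesis
    by (simp add: atom_count_eq_ecard atoms_below_conv ecard_image)
qed

lemma atom_count_sup_inf: "atom_count x + atom_count y = atom_count (sup x y) + atom_count (inf x y)"
  unfolding atom_count_eq_ecard atoms_below_sup atoms_below_inf by (rule ecard_Un_Int)

lemma atom_count_mono: "x \<le> y \<Longrightarrow> atom_count x \<le> atom_count y"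
  by (simp add: atom_count_eq_ecard atoms_below_mono ecard_mono)

lemma atom_count_eq_0_iff:
  assumes "\<forall>x::'a::stone_relation_algebra. x \<noteq> bot \<longrightarrow> (\<exists>a. atom a \<and> a \<le> x)"
  shows "atom_count (x::'a) = 0 \<longleftrightarrow> x = bot"
  by (simp add: atom_count_eq_ecard ecard_eq_0_iff atoms_below_empty_iff[OF assms])

lemma atom_count_le_by_witnesses:
  fixes u v :: "'a::stone_relation_algebra"
  assumes atomic: "\<forall>x::'a. x \<noteq> bot \<longrightarrow> (\<exists>a. atom a \<and> a \<le> x)"
    and meets: "\<And>a. atom a \<Longrightarrow> a \<le> u \<Longrightarrow> inf v (g a) \<noteq> bot"
    and disjoint: "\<And>a b. a \<le> u \<Longrightarrow> b \<le> u \<Longrightarrow> inf a b = bot \<Longrightarrow> inf (g a) (g b) = bot"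
  shows "atom_count u \<le> atom_count v"
proof -
  define f where "f a = (SOME b. atom b \<and> b \<le> inf v (g a))" for a
  have f: "atom (f a) \<and> f a \<le> inf v (g a)" if "a \<in> atoms_below u" for a
    using that atomic meets unfolding f_def atoms_below_def
    by (metis (mono_tags, lifting) mem_Collect_eq someI_ex)
  then have "f ` atoms_below u \<subseteq> atoms_below v"
    by (auto simp: atoms_below_def)
  moreover have "inj_on f (atoms_below u)"
  proof (rule inj_onI, rule ccontr)
    fix a b assume a: "a \<in> atoms_below u" and b: "b \<in> atoms_below u" and "f a = f b" "a \<noteq> b"
    then have "f a \<le> inf (g a) (g b)"
      using f by (metis le_inf_iff)
    also have "\<dots> = bot"
      using a b \<open>a \<noteq> b\<close> disjoint atoms_inf_eq_bot unfolding atoms_below_def by blast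
    finally show False
      using f[OF a] atom_not_le_bot by blast
  qed
  ultimately show ?thesis
    unfolding atom_count_eq_ecard by (rule ecard_inj_on_le[rotated])
qed

lemma atom_count_conv_comp_inf_le:
  fixes x :: "'a::stone_relation_algebra"
  assumes atomic: "\<forall>x::'a. x \<noteq> bot \<longrightarrow> (\<exists>a. atom a \<and> a \<le> x)"
    and "univalent x"
  shows "atom_count (inf (conv x * y) z) \<le> atom_count (inf (x * z) y)"
proof (rule atom_count_le_by_witnesses[OF atomic, where g = "\<lambda>a. x * a"])
  fix a :: 'a assume a: "atom a" "a \<le> inf (conv x * y) z"
  then have "a \<le> inf (conv x * y) a"
    by simp
  also have "\<dots> \<le> conv x * inf y (x * a)"
    using dedekind_1[of "conv x" y a] by (simp add: conv_involutive)
  finally have "inf y (x * a) \<noteq> bot"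
    using a(1) atom_not_le_bot comp_right_zero by metis
  moreover have "x * a \<le> x * z"
    using a(2) by (simp add: comp_left_isotone)
  ultimately show "inf (inf (x * z) y) (x * a) \<noteq> bot"
    by (metis inf.absorb2 inf_assoc inf_commute)
next
  fix a b :: 'a assume "inf a b = bot"
  then show "inf (x * a) (x * b) = bot"
    using univalent_comp_left_dist_inf[OF \<open>univalent x\<close>] comp_right_zero by metis
qed

lemma atom_count_univalent_inf_comp_conv_le:
  fixes x :: "'a::stone_relation_algebra"
  assumes atomic: "\<forall>x::'a. x \<noteq> bot \<longrightarrow> (\<exists>a. atom a \<and> a \<le> x)"
    and "univalent x"
  shows "atom_count (inf x (y * conv z)) \<le> atom_count (inf (x * z) y)"
proof (rule atom_count_le_by_witnesses[OF atomic, where g = "\<lambda>a. a * z"])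
  fix a :: 'a assume a: "atom a" "a \<le> inf x (y * conv z)"
  then have "a \<le> inf (y * conv z) a"
    by simp
  also have "\<dots> \<le> inf y (a * z) * conv z"
    using dedekind_2[of y "conv z" a] by (simp add: conv_involutive)
  finally have "inf y (a * z) \<noteq> bot"
    using a(1) atom_not_le_bot comp_left_zero by metis
  moreover have "a * z \<le> x * z"
    using a(2) by (simp add: comp_right_isotone)
  ultimately show "inf (inf (x * z) y) (a * z) \<noteq> bot"
    by (metis inf.absorb2 inf_assoc inf_commute)
next
  fix a b :: 'a assume "a \<le> inf x (y * conv z)" "b \<le> inf x (y * conv z)" "inf a b = bot"
  then show "inf (a * z) (b * z) = bot"
    using univalent_below_comp_right_dist_inf[OF \<open>univalent x\<close>, of a b z] comp_left_zero
    by (metis le_inf_iff)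
qed

lemma atom_count_comp_univalent_le:
  fixes x :: "'a::stone_relation_algebra"
  assumes "\<forall>x::'a. x \<noteq> bot \<longrightarrow> (\<exists>a. atom a \<and> a \<le> x)"
    and "univalent x"
  shows "atom_count (y * x) \<le> atom_count y"
proof -
  have "atom_count (y * x) = atom_count (inf (conv x * conv y) top)"
    by (metis atom_count_conv conv_dist_comp inf_top_right)
  also have "\<dots> \<le> atom_count (inf (x * top) (conv y))"
    using atom_count_conv_comp_inf_le[OF assms] .
  also have "\<dots> \<le> atom_count y"
    by (metis atom_count_conv atom_count_mono inf_le2)
  finally show ?thesis .
qed

lemma atom_count_univalent_inf_comp_top_le:
  fixes x :: "'a::stone_relation_algebra"
  assumes "\<forall>x::'a. x \<noteq> bot \<longrightarrow> (\<exists>a. atom a \<and> a \<le> x)"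
    and "univalent x"
  shows "atom_count (inf x (y * top)) \<le> atom_count y"
  using atom_count_univalent_inf_comp_conv_le[OF assms, of y top]
    atom_count_mono[OF inf_le2, of "x * top" y]
  by (simp add: conv_top)

lemma atom_count_univalent_inf_comp_conv_self_le:
  fixes x :: "'a::stone_relation_algebra"
  assumes "\<forall>x::'a. x \<noteq> bot \<longrightarrow> (\<exists>a. atom a \<and> a \<le> x)"
    and "univalent x"
  shows "atom_count (inf x (y * conv y)) \<le> atom_count y"
  using atom_count_univalent_inf_comp_conv_le[OF assms, of y y]
    atom_count_mono[OF inf_le2, of "x * y" y]
  by simp

lemma atom_count_one_inf_comp_conv_le:
  assumes "\<forall>x::'a::stone_relation_algebra. x \<noteq> bot \<longrightarrow> (\<exists>a. atom a \<and> a \<le> x)"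
  shows "atom_count (inf 1 (x * conv x)) \<le> atom_count (x::'a)"
  by (rule atom_count_univalent_inf_comp_conv_self_le[OF assms univalent_one])

lemma atom_count_one_inf_conv_comp_le:
  assumes "\<forall>x::'a::stone_relation_algebra. x \<noteq> bot \<longrightarrow> (\<exists>a. atom a \<and> a \<le> x)"
  shows "atom_count (inf 1 (conv x * x)) \<le> atom_count (x::'a)"
  using atom_count_one_inf_comp_conv_le[OF assms, of "conv x"]
  by (simp add: conv_involutive atom_count_conv)

theorem mainTheorem2:
  fixes C :: "'a::stone_relation_algebra \<Rightarrow> enat"
  defines "C \<equiv> atom_count"
  shows "C bot = 0
    \<and> (\<forall>x. atom x \<longrightarrow> C x = 1)
    \<and> (\<forall>x. C (conv x) = C x)
    \<and> (\<forall>x y. C x + C y = C (sup x y) + C (inf x y))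
    \<and> (\<forall>x y. x \<le> y \<longrightarrow> C x \<le> C y)
    \<and> ((\<forall>x::'a. x \<noteq> bot \<longrightarrow> (\<exists>a. atom a \<and> a \<le> x)) \<longrightarrow>
         (\<forall>x. C x = 0 \<longleftrightarrow> x = bot)
       \<and> (\<forall>x y z. univalent x \<longrightarrow> C (inf (conv x * y) z) \<le> C (inf (x * z) y))
       \<and> (\<forall>x y z. univalent x \<longrightarrow> C (inf x (y * conv z)) \<le> C (inf (x * z) y))
       \<and> (\<forall>x y. univalent x \<longrightarrow> C (y * x) \<le> C y)
       \<and> (\<forall>x y. univalent x \<longrightarrow> C (inf x (y * top)) \<le> C y)
       \<and> (\<forall>x y. univalent x \<longrightarrow> C (inf x (y * conv y)) \<le> C y)
       \<and> (\<forall>x. C (inf 1 (x * conv x)) \<le> C x)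
       \<and> (\<forall>x. C (inf 1 (conv x * x)) \<le> C x))"
  unfolding C_def
  by (intro conjI allI impI)
    (assumption | rule atom_count_bot atom_count_atom atom_count_conv atom_count_sup_inf
      atom_count_mono atom_count_eq_0_iff atom_count_conv_comp_inf_le
      atom_count_univalent_inf_comp_conv_le atom_count_comp_univalent_le
      atom_count_univalent_inf_comp_top_le atom_count_univalent_inf_comp_conv_self_le
      atom_count_one_inf_comp_conv_le atom_count_one_inf_conv_comp_le)+

end
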